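(* For every $t \in \mathrm{Lie}(\mathcal{PT})$ and all $\alpha_1,\alpha_2 \in S(\mathcal{PA})$, \[ \rho(t)(\alpha_1\alpha_2)=\rho(t)(\alpha_1)\,\alpha_2+\alpha_1\,\rho(t)(\alpha_2). \]
   Context: Work over a fixed ground field. A planar rooted tree is a finite rooted tree, with edges oriented away from the root, together with a total order on the outgoing edges of each vertex; $\mathcal{PT}$ is the vector space spanned by isomorphism classes of planar rooted trees. $\mathrm{Lie}(\mathcal{PT})$ is the free Lie algebra on $\mathcal{PT}$, with bracket $[\cdot,\cdot]$. For planar trees $t_1,t_2$, the left grafting $t_1 \rhd t_2$ is the sum, over all vertices $v$ of $t_2$, of the planar tree obtained by adding an edge from $v$ to the root of $t_1$ as the leftmost (first) outgoing edge of $v$. It is extended to $\mathrm{Lie}(\mathcal{PT})$ by the rules \[ t_1\rhd[t_2,t_3]=[t_1\rhd t_2,t_3]+[t_2,t_1\rhd t_3], \] \[ [t_1,t_2]\rhd t_3=t_1\rhd(t_2\rhd t_3)-(t_1\rhd t_2)\rhd t_3-t_2\rhd(t_1\rhd t_3)+(t_2\rhd t_1)\rhd t_3. \] A planar aroma is an isomorphism class of finite connected directed graphs (loops allowed) in which every vertex has exactly one incoming edge, together with a total order on the outgoing edges of each vertex. $\mathcal{PA}$ is their span and $S(\mathcal{PA})$ is the symmetric algebra on $\mathcal{PA}$; its monomials are finite multisets of planar aromas. For a planar tree $t$ and a monomial $\alpha \in S(\mathcal{PA})$, $\rho(t)(\alpha)$ is the sum, over all vertices $v$ of all factors of $\alpha$,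 of the monomial obtained by adding an edge from $v$ to the root of $t$ as the leftmost outgoing edge of $v$; this is extended linearly in $\alpha$. For Lie polynomials $\rho$ is defined recursively by \[ \rho([t_1,t_2])(\alpha)=\rho(t_1)(\rho(t_2)(\alpha))-\rho(t_1\rhd t_2)(\alpha)-\rho(t_2)(\rho(t_1)(\alpha))+\rho(t_2\rhd t_1)(\alpha). \] *)

theory Defs
  imports "HOL-Library.Poly_Mapping" "HOL-Library.Multiset"
begin

text \<open>A planar rooted tree is a root together with the ordered list of its
  subtrees (the targets of its ordered outgoing edges); this datatype is in
  bijection with isomorphism classes of planar rooted trees.\<close>

datatype ptree = PNode "ptree list"

text \<open>graft_all s t: list (with multiplicity, one entry per vertex v of t)
  of the trees obtained by adding an edge from v to the root of s as the
  leftmost outgoing edge of v.  graft_list s ts: the same, for a forest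
  ts, returning the modified forests (exactly one tree modified).\<close>

fun graft_all :: "ptree \<Rightarrow> ptree \<Rightarrow> ptree list"
and graft_list :: "ptree \<Rightarrow> ptree list \<Rightarrow> ptree list list" where
  "graft_all s (PNode cs) = PNode (s # cs) # map PNode (graft_list s cs)"
| "graft_list s [] = []"
| "graft_list s (c # cs) =
     map (\<lambda>c'. c' # cs) (graft_all s c) @ map (\<lambda>cs'. c # cs') (graft_list s cs)"

text \<open>The vector space spanned by a set of basis objects 'b over the field
  'k is rendered as finitely supported functions 'b \<Rightarrow>0 'k.\<close>

definition scale :: "'k::field \<Rightarrow> ('b \<Rightarrow>\<^sub>0 'k) \<Rightarrow> ('b \<Rightarrow>\<^sub>0 'k)" where
  "scale c p = Poly_Mapping.map (\<lambda>x. c * x) p"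

definition lext :: "('a \<Rightarrow> ('b \<Rightarrow>\<^sub>0 'k::field)) \<Rightarrow> ('a \<Rightarrow>\<^sub>0 'k) \<Rightarrow> ('b \<Rightarrow>\<^sub>0 'k)" where
  "lext f x = (\<Sum>u\<in>Poly_Mapping.keys x. scale (Poly_Mapping.lookup x u) (f u))"

definition lc_of_list :: "'b list \<Rightarrow> ('b \<Rightarrow>\<^sub>0 'k::field)" where
  "lc_of_list xs = sum_list (map (\<lambda>b. Poly_Mapping.single b 1) xs)"

text \<open>Lie(PT) is spanned by
  the images of the words ptree lword; we work with linear combinations of
  words, i.e. with the free non-associative algebra on PT, which surjects onto
  Lie(PT).  Note that the datatype size of a word counts only
  its brackets (its skeleton).\<close>

datatype 'a lword = Gen 'a | Br "'a lword" "'a lword"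

type_synonym 'k lie = "ptree lword \<Rightarrow>\<^sub>0 'k"

definition lbr :: "'k::field lie \<Rightarrow> 'k lie \<Rightarrow> 'k lie" where
  "lbr x y = lext (\<lambda>u. lext (\<lambda>v. Poly_Mapping.single (Br u v) 1) y) x"

definition word :: "ptree lword \<Rightarrow> 'k::field lie" where
  "word w = Poly_Mapping.single w 1"

text \<open>In the bracket-on-the-left clause, the inner
  products (t1 \<rhd> t2) and (t2 \<rhd> t1) are linear combinations of words with
  the same bracket skeleton as t2 (resp. t1), hence of strictly smaller size
  than Br t1 t2; the guard "size z < size (Br a b)" is therefore always
  satisfied and only serves to make the recursion visibly well-founded.\<close>

function gr :: "ptree lword \<Rightarrow> ptree lword \<Rightarrow> 'k::field lie" where
  "gr (Gen s) (Gen t) = lc_of_list (map Gen (graft_all s t))"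
| "gr (Gen s) (Br u v) = lbr (gr (Gen s) u) (word v) + lbr (word u) (gr (Gen s) v)"
| "gr (Br a b) w =
     lext (\<lambda>u. gr a u) (lext (\<lambda>u. gr b u) (word w))
   - lext (\<lambda>z. if size z < size (Br a b) then gr z w else 0) (gr a b)
   - lext (\<lambda>u. gr b u) (lext (\<lambda>u. gr a u) (word w))
   + lext (\<lambda>z. if size z < size (Br a b) then gr z w else 0) (gr b a)"
  by pat_completeness auto
termination
  by (relation "measures [\<lambda>(a, w). size a, \<lambda>(a, w). size w]") auto

definition lgraft :: "'k::field lie \<Rightarrow> 'k lie \<Rightarrow> 'k lie" (infixl \<open>\<rhd>\<close> 70) where
  "x \<rhd> y = lext (\<lambda>u. lext (\<lambda>v. gr u v) y) x"

text \<open>A (finite, connected) planar aroma has a unique directed cycle; each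
  cycle vertex carries its ordered outgoing edges, one of which is the cycle
  edge, so it is described by the list L of planar trees hanging from the
  edges before the cycle edge and the list R of those after it.  An aroma is
  thus a nonempty cyclic list of such pairs, up to rotation; this is in
  bijection with isomorphism classes of planar aromas.  A nonempty list is
  written x # xs, represented by the pair (x, xs).\<close>

type_synonym cyc_vertex = "ptree list \<times> ptree list"

definition rot_eq :: "cyc_vertex \<times> cyc_vertex list \<Rightarrow> cyc_vertex \<times> cyc_vertex list \<Rightarrow> bool" where
  "rot_eq p q \<longleftrightarrow> (\<exists>n. rotate n (fst p # snd p) = fst q # snd q)"

lemma rot_eq_equivp: "equivp rot_eq"
proof (rule equivpI)
  show "reflp rot_eq" by (auto simp: reflp_def rot_eq_def intro: exI[of _ 0])
  show "transp rot_eq"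
    unfolding transp_def rot_eq_def by (metis rotate_rotate)
  show "symp rot_eq"
    unfolding symp_def rot_eq_def
  proof (intro allI impI)
    fix x y :: "cyc_vertex \<times> cyc_vertex list"
    assume "\<exists>n. rotate n (fst x # snd x) = fst y # snd y"
    then obtain n where n: "rotate n (fst x # snd x) = fst y # snd y" by blast
    let ?l = "fst x # snd x"
    define m where "m = length ?l - n mod length ?l"
    have "rotate m (rotate n ?l) = rotate (m + n) ?l" by (simp add: rotate_rotate)
    also have "\<dots> = rotate (m + n mod length ?l) ?l"
      by (metis mod_add_right_eq rotate_conv_mod)
    also have "m + n mod length ?l = length ?l"
      unfolding m_def using mod_less_divisor[of "length ?l" n] by simp
    also have "rotate (length ?l) ?l = ?l" by (rule rotate_id) simp
    finally show "\<exists>n. rotate n (fst y # snd y) = fst x # snd x"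
      using n by metis
  qed
qed

quotient_type aroma = "cyc_vertex \<times> cyc_vertex list" / rot_eq
  by (rule rot_eq_equivp)

definition vgrafts :: "ptree \<Rightarrow> cyc_vertex \<Rightarrow> cyc_vertex list" where
  "vgrafts t p = (t # fst p, snd p)
      # map (\<lambda>L'. (L', snd p)) (graft_list t (fst p))
      @ map (\<lambda>R'. (fst p, R')) (graft_list t (snd p))"

definition cgrafts :: "ptree \<Rightarrow> cyc_vertex list \<Rightarrow> cyc_vertex list list" where
  "cgrafts t xs = concat (map (\<lambda>i. map (\<lambda>p. xs[i := p]) (vgrafts t (xs ! i))) [0..<length xs])"

definition aroma_grafts :: "ptree \<Rightarrow> aroma \<Rightarrow> aroma list" where
  "aroma_grafts t A =
     (let xs = fst (rep_aroma A) # snd (rep_aroma A)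
      in map (\<lambda>ys. abs_aroma (hd ys, tl ys)) (cgrafts t xs))"

text \<open>S(PA) is the monoid algebra of the free commutative monoid of finite
  multisets of planar aromas: aroma multiset =>0 'k, whose library product
  (convolution) is the product of the symmetric algebra.\<close>

type_synonym 'k sym = "aroma multiset \<Rightarrow>\<^sub>0 'k"

definition graftM :: "ptree \<Rightarrow> aroma multiset \<Rightarrow> 'k::field sym" where
  "graftM t M = sum_mset (image_mset (\<lambda>A.
      lc_of_list (map (\<lambda>A'. add_mset A' (M - {#A#})) (aroma_grafts t A))) M)"

fun rho :: "ptree lword \<Rightarrow> 'k::field sym \<Rightarrow> 'k sym" where
  "rho (Gen t) = lext (graftM t)"
| "rho (Br a b) = (\<lambda>\<alpha>.
      rho a (rho b \<alpha>)
    - lext (\<lambda>z. if size z < size (Br a b) then rho z \<alpha> else 0) (gr a b)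
    - rho b (rho a \<alpha>)
    + lext (\<lambda>z. if size z < size (Br a b) then rho z \<alpha> else 0) (gr b a))"

definition rhoL :: "'k::field lie \<Rightarrow> 'k sym \<Rightarrow> 'k sym" where
  "rhoL x \<alpha> = (\<Sum>u\<in>Poly_Mapping.keys x. scale (Poly_Mapping.lookup x u) (rho u \<alpha>))"

end

theory Submission
  imports Defs HOL.Modules
begin

text \<open>Grafting a tree onto a monomial of aromas touches exactly one factor, so
  rho of a single tree is a derivation of the symmetric algebra.  Derivations
  are closed under linear combinations and commutators, and the recursive
  definition of rho on a bracket is the commutator of two derivations corrected
  by linear combinations of rho on words with a smaller bracket skeleton; hence,
  by induction on the skeleton, every rho w is a derivation, and so is its
  linear extension to Lie elements.\<close>

definition derivation :: "('a::ring \<Rightarrow> 'a) \<Rightarrow> bool" where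
  "derivation D \<longleftrightarrow> additive D \<and> (\<forall>x y. D (x * y) = D x * y + x * D y)"

lemma derivationI:
  assumes "\<And>x y. D (x + y) = D x + D y" and "\<And>x y. D (x * y) = D x * y + x * D y"
  shows "derivation D"
  using assms by (simp add: derivation_def additive_def)

lemma derivation_plus: "derivation D \<Longrightarrow> D (x + y) = D x + D y"
  by (simp add: derivation_def additive.add)

lemma derivation_mult: "derivation D \<Longrightarrow> D (x * y) = D x * y + x * D y"
  by (simp add: derivation_def)

lemma derivation_zero: "derivation (\<lambda>_. 0)"
  by (rule derivationI) simp_all

lemma derivation_add: "derivation D \<Longrightarrow> derivation E \<Longrightarrow> derivation (\<lambda>x. D x + E x)"
  by (rule derivationI) (simp_all add: derivation_plus derivation_mult algebra_simps)

lemma derivation_diff: "derivation D \<Longrightarrow> derivation E \<Longrightarrow> derivation (\<lambda>x. D x - E x)"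
  by (rule derivationI) (simp_all add: derivation_plus derivation_mult algebra_simps)

lemma derivation_commutator:
  "derivation D \<Longrightarrow> derivation E \<Longrightarrow> derivation (\<lambda>x. D (E x) - E (D x))"
  by (rule derivationI) (simp_all add: derivation_plus derivation_mult algebra_simps)

lemma derivation_sum:
  assumes "\<And>u. u \<in> S \<Longrightarrow> derivation (F u)"
  shows "derivation (\<lambda>x. \<Sum>u\<in>S. F u x)"
  using assms
  by (induction S rule: infinite_finite_induct) (simp_all add: derivation_zero derivation_add)

lemma scale_conv_mult: "scale c p = Poly_Mapping.single 0 c * p"
  by (simp add: scale_def mult_map_scale_conv_mult)

lemma derivation_scale:
  fixes D :: "('b::comm_monoid_add \<Rightarrow>\<^sub>0 'k::field) \<Rightarrow> _"
  assumes "derivation D"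
  shows "derivation (\<lambda>x. scale c (D x))"
  by (rule derivationI)
    (use assms in \<open>simp_all add: scale_conv_mult derivation_plus derivation_mult algebra_simps\<close>)

lemma lookup_scale: "Poly_Mapping.lookup (scale c p) k = c * Poly_Mapping.lookup p k"
  unfolding scale_def by transfer (simp add: when_def)

lemma scale_zero_left [simp]: "scale 0 p = 0"
  by (rule poly_mapping_eqI) (simp add: lookup_scale)

lemma scale_add_left: "scale (a + b) p = scale a p + scale b p"
  by (rule poly_mapping_eqI) (simp add: lookup_scale lookup_add distrib_right)

lemma lext_eq_sum_superset:
  assumes "finite S" "Poly_Mapping.keys x \<subseteq> S"
  shows "lext f x = (\<Sum>u\<in>S. scale (Poly_Mapping.lookup x u) (f u))"
  unfolding lext_def
proof (rule sum.mono_neutral_left)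
  show "\<forall>u\<in>S - Poly_Mapping.keys x. scale (Poly_Mapping.lookup x u) (f u) = 0"
    by (auto simp: in_keys_iff)
qed (use assms in auto)

lemma lext_add: "lext f (x + y) = lext f x + lext f y"
proof -
  let ?S = "Poly_Mapping.keys x \<union> Poly_Mapping.keys y"
  have "lext f (x + y) = (\<Sum>u\<in>?S. scale (Poly_Mapping.lookup (x + y) u) (f u))"
    by (rule lext_eq_sum_superset) (use keys_add[of x y] in auto)
  also have "\<dots> = (\<Sum>u\<in>?S. scale (Poly_Mapping.lookup x u) (f u))
                  + (\<Sum>u\<in>?S. scale (Poly_Mapping.lookup y u) (f u))"
    by (simp add: lookup_add scale_add_left sum.distrib)
  also have "\<dots> = lext f x + lext f y"
    using lext_eq_sum_superset[of ?S x f] lext_eq_sum_superset[of ?S y f] by simp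
  finally show ?thesis .
qed

lemma lext_single: "lext f (Poly_Mapping.single k a) = Poly_Mapping.single 0 a * f k"
  by (cases "a = 0") (auto simp: lext_def scale_conv_mult)

lemma derivation_lext_family:
  fixes F :: "'a \<Rightarrow> ('b::comm_monoid_add \<Rightarrow>\<^sub>0 'k::field) \<Rightarrow> _"
  assumes "\<And>z. derivation (F z)"
  shows "derivation (\<lambda>x. lext (\<lambda>z. F z x) c)"
  unfolding lext_def by (intro derivation_sum derivation_scale assms)

lemma poly_mapping_sum_singles:
  "p = (\<Sum>k\<in>Poly_Mapping.keys p. Poly_Mapping.single k (Poly_Mapping.lookup p k))"
  by (rule poly_mapping_eqI)
    (auto simp: lookup_sum lookup_single when_def in_keys_iff)

lemma derivation_of_single_leibniz:
  fixes D :: "('b::comm_monoid_add \<Rightarrow>\<^sub>0 'k::comm_ring_1) \<Rightarrow> _"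
  assumes add: "additive D"
    and single: "\<And>M N a b. D (Poly_Mapping.single M a * Poly_Mapping.single N b)
      = D (Poly_Mapping.single M a) * Poly_Mapping.single N b
        + Poly_Mapping.single M a * D (Poly_Mapping.single N b)"
  shows "derivation D"
  unfolding derivation_def
proof (intro conjI allI add)
  fix x y :: "'b \<Rightarrow>\<^sub>0 'k"
  define sx where "sx M = Poly_Mapping.single M (Poly_Mapping.lookup x M)" for M
  define sy where "sy M = Poly_Mapping.single M (Poly_Mapping.lookup y M)" for M
  let ?A = "Poly_Mapping.keys x" and ?B = "Poly_Mapping.keys y"
  have x: "x = (\<Sum>M\<in>?A. sx M)" and y: "y = (\<Sum>M\<in>?B. sy M)"
    unfolding sx_def sy_def by (fact poly_mapping_sum_singles)+
  have "D (x * y) = (\<Sum>i\<in>?A. \<Sum>j\<in>?B. D (sx i * sy j))"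
    by (subst x, subst y) (simp add: sum_product additive.sum[OF add])
  also have "\<dots> = (\<Sum>i\<in>?A. \<Sum>j\<in>?B. D (sx i) * sy j + sx i * D (sy j))"
    unfolding sx_def sy_def by (simp add: single)
  also have "\<dots> = (\<Sum>i\<in>?A. D (sx i)) * (\<Sum>j\<in>?B. sy j) + (\<Sum>i\<in>?A. sx i) * (\<Sum>j\<in>?B. D (sy j))"
    by (simp add: sum.distrib sum_product)
  also have "\<dots> = D x * y + x * D y"
    by (subst (3 4) x, subst (1 2) y) (simp add: additive.sum[OF add])
  finally show "D (x * y) = D x * y + x * D y" .
qed

lemma derivation_lext:
  fixes g :: "'b::comm_monoid_add \<Rightarrow> ('b \<Rightarrow>\<^sub>0 'k::field)"
  assumes g: "\<And>M N. g (M + N) = g M * Poly_Mapping.single N 1 + Poly_Mapping.single M 1 * g N"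
  shows "derivation (lext g)"
proof (rule derivation_of_single_leibniz)
  show "additive (lext g)"
    by (simp add: additive_def lext_add)
  have unit: "Poly_Mapping.single M a = Poly_Mapping.single 0 a * Poly_Mapping.single M 1"
    for M :: 'b and a :: 'k
    by (simp add: mult_single)
  fix M N :: 'b and a b :: 'k
  let ?s = "Poly_Mapping.single :: 'b \<Rightarrow> 'k \<Rightarrow> _"
  have "lext g (?s M a * ?s N b) = ?s 0 a * ?s 0 b * (g M * ?s N 1 + ?s M 1 * g N)"
    by (simp add: mult_single lext_single g)
  also have "\<dots> = (?s 0 a * g M) * (?s 0 b * ?s N 1) + (?s 0 a * ?s M 1) * (?s 0 b * g N)"
    by (simp only: algebra_simps)
  also have "\<dots> = lext g (?s M a) * ?s N b + ?s M a * lext g (?s N b)"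
    by (simp only: lext_single unit[symmetric])
  finally show "lext g (?s M a * ?s N b) = lext g (?s M a) * ?s N b + ?s M a * lext g (?s N b)" .
qed

lemma lc_of_list_map_add_right:
  "(lc_of_list (map (\<lambda>x. f x + N) l) :: 'b::monoid_add \<Rightarrow>\<^sub>0 'k::field)
    = lc_of_list (map f l) * Poly_Mapping.single N 1"
  by (induction l) (simp_all add: lc_of_list_def mult_single distrib_right)

lemma lc_of_list_map_add_left:
  "(lc_of_list (map (\<lambda>x. M + f x) l) :: 'b::monoid_add \<Rightarrow>\<^sub>0 'k::field)
    = Poly_Mapping.single M 1 * lc_of_list (map f l)"
  by (induction l) (simp_all add: lc_of_list_def mult_single distrib_left)

lemma graftM_union:
  "(graftM t (M + N) :: 'k::field sym)
    = graftM t M * Poly_Mapping.single N 1 + Poly_Mapping.single M 1 * graftM t N"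
proof -
  define F :: "aroma multiset \<Rightarrow> aroma \<Rightarrow> 'k sym" where
    "F X A = lc_of_list (map (\<lambda>A'. add_mset A' (X - {#A#})) (aroma_grafts t A))" for X A
  have graftM_F: "graftM t X = sum_mset (image_mset (F X) X)" for X
    by (simp add: graftM_def F_def[abs_def])
  have left: "F (M + N) A = F M A * Poly_Mapping.single N 1" if "A \<in># M" for A
  proof -
    have "add_mset A' (M + N - {#A#}) = add_mset A' (M - {#A#}) + N" for A'
      using that by (metis add_mset_add_single diff_union_single_conv union_assoc union_commute)
    then show ?thesis
      unfolding F_def by (simp only: lc_of_list_map_add_right)
  qed
  have right: "F (M + N) A = Poly_Mapping.single M 1 * F N A" if "A \<in># N" for A
  proof -
    have "add_mset A' (M + N - {#A#}) = M + add_mset A' (N - {#A#})" for A'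
      using that by (metis add_mset_add_single diff_union_single_conv union_assoc)
    then show ?thesis
      unfolding F_def by (simp only: lc_of_list_map_add_left)
  qed
  show ?thesis
    unfolding graftM_F image_mset_union sum_mset.union
    by (simp add: image_mset_cong[OF left] image_mset_cong[OF right]
        sum_mset_distrib_left sum_mset_distrib_right)
qed

lemma derivation_rho: "derivation (rho w :: 'k::field sym \<Rightarrow> 'k sym)"
proof (induction w rule: measure_induct_rule[of size])
  case (less w)
  show ?case
  proof (cases w)
    case (Gen t)
    then show ?thesis
      by (simp add: derivation_lext graftM_union)
  next
    case (Br a b)
    define R :: "ptree lword \<Rightarrow> 'k sym \<Rightarrow> 'k sym" where
      "R z \<alpha> = (if size z < size (Br a b) then rho z \<alpha> else 0)" for z \<alpha>
    have R: "derivation (R z)" for z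
      using less Br by (cases "size z < size w") (simp_all add: R_def[abs_def] derivation_zero)
    have rho_w: "rho w = (\<lambda>\<alpha>. (rho a (rho b \<alpha>) - rho b (rho a \<alpha>))
        - lext (\<lambda>z. R z \<alpha>) (gr a b) + lext (\<lambda>z. R z \<alpha>) (gr b a))"
      by (simp add: Br R_def fun_eq_iff algebra_simps)
    show ?thesis
      unfolding rho_w using less Br R
      by (intro derivation_add derivation_diff derivation_commutator derivation_lext_family) auto
  qed
qed

theorem mainTheorem1:
  fixes t :: "'k::field lie" and \<alpha>1 \<alpha>2 :: "'k sym"
  shows "rhoL t (\<alpha>1 * \<alpha>2) = rhoL t \<alpha>1 * \<alpha>2 + \<alpha>1 * rhoL t \<alpha>2"
proof -
  have rhoL_t: "rhoL t = (\<lambda>\<alpha>. lext (\<lambda>u. rho u \<alpha>) t)"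
    by (simp add: fun_eq_iff rhoL_def lext_def)
  have "derivation (rhoL t)"
    unfolding rhoL_t by (intro derivation_lext_family derivation_rho)
  then show ?thesis
    by (rule derivation_mult)
qed

end
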